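(* Let $n\ge 1$, let $\mathcal{C}$ be a set of conditions, let $\varnothing\notin\mathcal{C}$ denote the null condition, fix $c\in\mathcal{C}$, let $N=2^m$ with $m\ge 1$ an integer, and set $d=1/N$. Let $s:\mathbb{R}^n\times[0,1]\times(\mathcal{C}\cup\{\varnothing\})\times(0,1]\to\mathbb{R}^n$ be any function (the shortcut model), and for a real number $\omega$ define the guided output $$g^{\omega}(x,t,c,\delta)=\omega\, s(x,t,c,\delta)+(1-\omega)\, s(x,t,\varnothing,\delta).$$ Fix a guidance scale $w\in\mathbb{R}$ and points $y_0,y_1,\dots,y_N\in\mathbb{R}^n$, where $y_i$ is associated with time $i/N$. Assume the following ideal self-consistency conditions hold: for every $j\in\{0,1,\dots,m-1\}$ and every index $i\in\{0,\dots,N-1\}$ that is a multiple of $2^{j+1}$, $$s\!\left(y_i,\tfrac{i}{N},c,2^{j+1}d\right)=\tfrac12\Big[g^{w}\!\left(y_i,\tfrac{i}{N},c,2^{j}d\right)+g^{w}\!\left(y_{i+2^j},\tfrac{i+2^j}{N},c,2^{j}d\right)\Big],$$ $$s\!\left(y_i,\tfrac{i}{N},\varnothing,2^{j+1}d\right)=\tfrac12\Big[s\!\left(y_i,\tfrac{i}{N},\varnothing,2^{j}d\right)+s\!\left(y_{i+2^j},\tfrac{i+2^j}{N},\varnothing,2^{j}d\right)\Big].$$ Then the one-step output of size $Nd=1$ satisfies $$s(y_0,0,c,Nd)=\frac1N\sum_{i=0}^{N-1} g^{\,w^{\log_2 N}}\!\left(y_i,\tfrac{i}{N},c,d\right),$$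 i.e. it equals the average of the $N$ smallest-step guided outputs, but with the guidance scale compounded to $w^{\log_2 N}$.
   Context: This formalizes the "accumulated guidance" effect in shortcut models: a network $s(x,t,c,\delta)$ conditioned on a sample $x$, time $t$, condition $c$ (or null condition $\varnothing$) and step size $\delta$, trained with classifier-free guidance of fixed scale $w$ inside a self-consistency target (one step of size $2\delta$ equals the average of two consecutive guided steps of size $\delta$). The "ideal" assumptions above express that the self-consistency loss is exactly zero at the relevant points. In the paper the points are the trajectory $y_0=x_0$ (initial noise), $y_{i+1}=y_i+s(y_i,i/N,c,d)\,d$, but the identity holds for any fixed points satisfying the stated conditions. Note the guided output convention used here is $g^\omega=\omega s(\cdot,c,\cdot)+(1-\omega)s(\cdot,\varnothing,\cdot)$. *)

theory Defs
  imports "HOL-Analysis.Analysis"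
begin

definition guided ::
  "('v::real_vector \<Rightarrow> real \<Rightarrow> 'c \<Rightarrow> real \<Rightarrow> 'v) \<Rightarrow> 'c \<Rightarrow> real \<Rightarrow> 'v \<Rightarrow> real \<Rightarrow> 'c \<Rightarrow> real \<Rightarrow> 'v"
  where "guided s null \<omega> x t c \<delta> = \<omega> *\<^sub>R s x t c \<delta> + (1 - \<omega>) *\<^sub>R s x t null \<delta>"

end

theory Submission
  imports Defs
begin

(* Write the guided output as g^omega = u + omega * D, with u the unconditional output and
   D = s(., c, .) - u the guidance direction. Self-consistency makes u at step size 2^k d the
   average of the 2^k smallest-step values of u, while D at step size 2^k d is w^k times the
   corresponding average of D: each doubling of the step size averages two neighbours and
   applies the guidance scale w once more. At k = m = log2 N this gives the average of
   u + w^m D = g^(w^m) over the N smallest steps. *)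

lemma guided_eq_null_plus_scaled_difference:
  "guided s null \<omega> x t c \<delta> = s x t null \<delta> + \<omega> *\<^sub>R (s x t c \<delta> - s x t null \<delta>)"
  by (simp add: guided_def algebra_simps)

lemma sum_lessThan_add_split:
  fixes f :: "nat \<Rightarrow> 'a::comm_monoid_add"
  shows "(\<Sum>l<a + b. f l) = (\<Sum>l<a. f l) + (\<Sum>l<b. f (a + l))"
  by (induction b) (simp_all add: add.assoc)

lemma dvd_less_imp_add_le:
  fixes i n b :: nat
  assumes "b dvd i" "b dvd n" "i < n"
  shows "i + b \<le> n"
proof -
  have "b dvd n - i" using assms by (simp add: dvd_diff_nat)
  then have "b \<le> n - i" using assms(3) by (simp add: dvd_imp_le)
  then show ?thesis using assms(3) by simp
qed

lemma dyadic_recursion_average: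
  fixes X :: "nat \<Rightarrow> nat \<Rightarrow> 'v::real_vector"
  assumes "2 ^ m dvd n"
    and rec: "\<And>k i. k < m \<Longrightarrow> i < n \<Longrightarrow> 2 ^ (k + 1) dvd i \<Longrightarrow>
      X (k + 1) i = (a / 2) *\<^sub>R (X k i + X k (i + 2 ^ k))"
  shows "k \<le> m \<Longrightarrow> i < n \<Longrightarrow> 2 ^ k dvd i \<Longrightarrow>
    X k i = (a ^ k / 2 ^ k) *\<^sub>R (\<Sum>l<2 ^ k. X 0 (i + l))"
proof (induction k arbitrary: i)
  case 0
  then show ?case by simp
next
  case (Suc k)
  have "2 ^ Suc k dvd n"
    using Suc.prems(1) assms(1) by (meson dvd_trans le_imp_power_dvd)
  then have "i + 2 ^ Suc k \<le> n"
    using Suc.prems by (simp add: dvd_less_imp_add_le)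
  then have "i + 2 * 2 ^ k \<le> n" by (simp only: power_Suc)
  moreover have "(0::nat) < 2 ^ k" by simp
  ultimately have right_block: "i + 2 ^ k < n" by linarith
  have "2 ^ k dvd i"
    using Suc.prems(3) by (simp add: dvd_mult_right)
  then have IH: "X k i = (a ^ k / 2 ^ k) *\<^sub>R (\<Sum>l<2 ^ k. X 0 (i + l))"
    and IH_right: "X k (i + 2 ^ k) = (a ^ k / 2 ^ k) *\<^sub>R (\<Sum>l<2 ^ k. X 0 (i + 2 ^ k + l))"
    using Suc.IH Suc.prems(1,2) right_block by simp_all
  have "X (Suc k) i = (a / 2) *\<^sub>R (X k i + X k (i + 2 ^ k))"
    using rec Suc.prems by simp
  also have "\<dots> = (a ^ Suc k / 2 ^ Suc k) *\<^sub>R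
      ((\<Sum>l<2 ^ k. X 0 (i + l)) + (\<Sum>l<2 ^ k. X 0 (i + (2 ^ k + l))))"
    unfolding IH IH_right by (simp add: scaleR_add_right add.assoc)
  also have "\<dots> = (a ^ Suc k / 2 ^ Suc k) *\<^sub>R (\<Sum>l<2 ^ k + 2 ^ k. X 0 (i + l))"
    by (simp only: sum_lessThan_add_split add.assoc)
  also have "\<dots> = (a ^ Suc k / 2 ^ Suc k) *\<^sub>R (\<Sum>l<2 ^ Suc k. X 0 (i + l))"
    by (simp only: power_Suc mult_2)
  finally show ?case .
qed

theorem proposition1:
  fixes C :: "'c set" and null :: 'c and c :: 'c
    and m N :: nat and d w :: real
    and s :: "real ^ 'n \<Rightarrow> real \<Rightarrow> 'c \<Rightarrow> real \<Rightarrow> real ^ 'n"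
    and y :: "nat \<Rightarrow> real ^ 'n"
  assumes "null \<notin> C" and "c \<in> C"
    and "m \<ge> 1" and "N = 2 ^ m" and "d = 1 / real N"
    and cond: "\<forall>j<m. \<forall>i<N. 2 ^ (j + 1) dvd i \<longrightarrow>
        s (y i) (real i / real N) c (2 ^ (j + 1) * d) =
          (1/2) *\<^sub>R (guided s null w (y i) (real i / real N) c (2 ^ j * d)
                     + guided s null w (y (i + 2 ^ j)) (real (i + 2 ^ j) / real N) c (2 ^ j * d))"
    and null_cond: "\<forall>j<m. \<forall>i<N. 2 ^ (j + 1) dvd i \<longrightarrow>
        s (y i) (real i / real N) null (2 ^ (j + 1) * d) =
          (1/2) *\<^sub>R (s (y i) (real i / real N) null (2 ^ j * d)
                     + s (y (i + 2 ^ j)) (real (i + 2 ^ j) / real N) null (2 ^ j * d))"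
  shows "s (y 0) 0 c (real N * d) =
    (1 / real N) *\<^sub>R (\<Sum>i<N. guided s null (w ^ nat \<lfloor>log 2 (real N)\<rfloor>) (y i) (real i / real N) c d)"
proof -
  define u where "u k i = s (y i) (real i / real N) null (2 ^ k * d)" for k i
  define \<Delta> where "\<Delta> k i = s (y i) (real i / real N) c (2 ^ k * d) - u k i" for k i
  have N: "N = 2 ^ m" "real N = 2 ^ m" "nat \<lfloor>log 2 (real N)\<rfloor> = m"
    using \<open>N = 2 ^ m\<close> by simp_all
  have u_avg: "u m 0 = (1 / 2 ^ m) *\<^sub>R (\<Sum>l<N. u 0 l)"
    using dyadic_recursion_average[of m N u 1 m 0] null_cond N by (simp add: u_def)
  have \<Delta>_rec: "\<Delta> (k + 1) i = (w / 2) *\<^sub>R (\<Delta> k i + \<Delta> k (i + 2 ^ k))"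
    if "k < m" "i < N" "2 ^ (k + 1) dvd i" for k i
    using that cond null_cond
    by (simp add: \<Delta>_def u_def guided_eq_null_plus_scaled_difference algebra_simps)
  have \<Delta>_avg: "\<Delta> m 0 = (w ^ m / 2 ^ m) *\<^sub>R (\<Sum>l<N. \<Delta> 0 l)"
    using dyadic_recursion_average[of m N \<Delta> w m 0] \<Delta>_rec N by simp
  have "s (y 0) 0 c (real N * d) = u m 0 + \<Delta> m 0"
    by (simp add: u_def \<Delta>_def N)
  also have "\<dots> = (1 / real N) *\<^sub>R (\<Sum>i<N. u 0 i + w ^ m *\<^sub>R \<Delta> 0 i)"
    unfolding u_avg \<Delta>_avg N(2) by (simp add: sum.distrib scaleR_add_right scaleR_sum_right[symmetric])
  also have "\<dots> = (1 / real N) *\<^sub>R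
      (\<Sum>i<N. guided s null (w ^ nat \<lfloor>log 2 (real N)\<rfloor>) (y i) (real i / real N) c d)"
    by (simp add: u_def \<Delta>_def N guided_eq_null_plus_scaled_difference)
  finally show ?thesis .
qed

end
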